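(* Let $q>1$ and let $k$ be a positive integer. For $z,s\in\mathbb{C}$ with $|z|<1$ and $\Re(s)<1$ (the variable of integration $a$ ranging over $a\in\mathbb C\setminus\mathbb Z_0^-$), $$\int_0^1 \Phi_k(z,s,a)\,d_qa=\frac{1}{[1-s]_q}+\sum_{r=0}^{k-1}\binom kr \sum_{l=0}^\infty\binom{-s}{l}\frac{\mathrm{Li}_{k-r}(z,s+l)}{[l+1]_q}.$$ Moreover, for $a\in\mathbb C\setminus\mathbb Z_0^-$ and with $s\in\mathbb C$ arbitrary when $|z|<1$, or $\Re(s)>k$ when $|z|=1$, $$\int_0^1 \Phi_k(z,s,k-a)\,d_qa= z^{-k}\sum_{l=0}^\infty(-1)^l\binom{-s}{l}\frac{\mathrm{Li}_{k}(z,s+l)}{[l+1]_q},$$ $$\int_0^1 \Phi_k(z,s,k+a)\,d_qa= z^{-k}\sum_{l=0}^\infty\binom{-s}{l}\frac{\mathrm{Li}_{k}(z,s+l)}{[l+1]_q}.$$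
   Context: $\mathbb Z_0^-=\{0,-1,-2,\ldots\}$. For $q>1$, the Jackson integral is $\int_0^1 f(a)\,d_qa=(q-1)\sum_{n=1}^\infty f(q^{-n})q^{-n}$, and $[x]_q=\frac{q^{x}-1}{q-1}$. The multiple Hurwitz-Lerch zeta function is $\Phi_k(z,s,a)=\sum_{m_1,\ldots,m_k=0}^\infty\frac{z^{m_1+\dots+m_k}}{(m_1+\dots+m_k+a)^{s}}$ for $a\in\mathbb C\setminus\mathbb Z_0^-$, with $s\in\mathbb C$ when $|z|<1$ and $\Re(s)>k$ when $|z|=1$. The multiple Lipschitz-Lerch zeta function is $\mathrm{Li}_k(z,s)=\sum_{m_1,\ldots,m_k=1}^\infty\frac{z^{m_1+\dots+m_k}}{(m_1+\dots+m_k)^{s}}$, with $s\in\mathbb C$ when $|z|<1$ and $\Re(s)>k$ when $|z|=1$. $\binom{-s}{l}=\frac{(-s)(-s-1)\cdots(-s-l+1)}{l!}$. *)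

theory Defs
  imports "HOL-Analysis.Analysis"
begin

text \<open>Jackson integral over [0,1] for q > 1:
  (q-1) * sum_{n>=1} f(q^{-n}) q^{-n}.  The summand for index n (starting at 0) uses q^{-(n+1)}.\<close>
definition jackson_term :: "real \<Rightarrow> (real \<Rightarrow> complex) \<Rightarrow> nat \<Rightarrow> complex" where
  "jackson_term q f n = of_real (q - 1) * f (q powr (- real (Suc n))) * of_real (q powr (- real (Suc n)))"

definition jackson_integrable :: "real \<Rightarrow> (real \<Rightarrow> complex) \<Rightarrow> bool" where
  "jackson_integrable q f \<longleftrightarrow> summable (jackson_term q f)"

definition jackson_integral :: "real \<Rightarrow> (real \<Rightarrow> complex) \<Rightarrow> complex" where
  "jackson_integral q f = (\<Sum>n. jackson_term q f n)"

definition qnum :: "real \<Rightarrow> complex \<Rightarrow> complex" where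
  "qnum q x = (of_real q powr x - 1) / (of_real q - 1)"

definition multi_HL_zeta :: "nat \<Rightarrow> complex \<Rightarrow> complex \<Rightarrow> complex \<Rightarrow> complex" where
  "multi_HL_zeta k z s a =
     (\<Sum>\<^sub>\<infinity>m\<in>{m::nat list. length m = k}. z ^ sum_list m / (of_nat (sum_list m) + a) powr s)"

definition multi_LL_zeta :: "nat \<Rightarrow> complex \<Rightarrow> complex \<Rightarrow> complex" where
  "multi_LL_zeta k z s =
     (\<Sum>\<^sub>\<infinity>m\<in>{m::nat list. length m = k \<and> (\<forall>i\<in>set m. 1 \<le> i)}.
        z ^ sum_list m / (of_nat (sum_list m)) powr s)"

end

theory Submission
  imports Defs "HOL-Real_Asymp.Real_Asymp"
begin

(* At the Jackson nodes x = q^-(n+1) expand each term (B + e x) powr -s of a Dirichlet series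
   binomially in powers of x.  The Jackson integral of x^l is 1/[l+1]_q, and the triple series over
   nodes, binomial powers and series indices converges absolutely, so it may be summed in either
   order.  With B = m_1 + ... + m_k + k this gives the two shifted identities, since shifting every
   m_i by one turns the multiple Hurwitz-Lerch sum into multi_LL_zeta k.  For the unshifted integral
   the zero tuple contributes the Jackson integral of a powr -s, which is 1/[1-s]_q for Re s < 1;
   a nonzero tuple with r vanishing entries is a choice of r positions together with a tuple of
   k - r positive entries, which produces the coefficients (k choose r). *)

section \<open>Jackson integrals\<close>

definition jackson_node :: "real \<Rightarrow> nat \<Rightarrow> real" where
  "jackson_node q n = (1 / q) ^ Suc n"

lemma jackson_term_node:
  assumes "q > 0"
  shows "jackson_term q f n = of_real ((q - 1) * jackson_node q n) * f (jackson_node q n)"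
proof -
  have "q powr (- real (Suc n)) = inverse (q ^ Suc n)"
    using assms by (simp add: powr_minus powr_realpow del: of_nat_Suc)
  also have "\<dots> = jackson_node q n"
    by (simp add: jackson_node_def power_one_over inverse_eq_divide)
  finally show ?thesis
    by (simp add: jackson_term_def mult_ac)
qed

lemma jackson_node_pos: "q > 0 \<Longrightarrow> 0 < jackson_node q n"
  by (simp add: jackson_node_def)

lemma jackson_node_le: "q \<ge> 1 \<Longrightarrow> jackson_node q n \<le> 1 / q"
  unfolding jackson_node_def power_Suc
  by (intro mult_left_le power_le_one) auto

lemma jackson_integral_sumsI:
  assumes "jackson_term q f sums J"
  shows "jackson_integrable q f" and "jackson_integral q f = J"
  using assms sums_summable sums_unique
  by (auto simp: jackson_integrable_def jackson_integral_def)

lemma qnum_of_nat: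
  assumes "q > 0"
  shows "qnum q (of_nat n) = of_real ((q ^ n - 1) / (q - 1))"
proof -
  have "(of_real q :: complex) powr of_nat n = of_real q ^ n"
    using assms by (intro powr_nat') auto
  then show ?thesis
    by (simp add: qnum_def)
qed

lemma has_sum_jackson_node_power:
  assumes "q > 1"
  shows "((\<lambda>n. (q - 1) * jackson_node q n ^ Suc l) has_sum (q - 1) / (q ^ Suc l - 1)) UNIV"
proof -
  define \<rho> where "\<rho> = (1 / q) ^ Suc l"
  have \<rho>: "0 < \<rho>" "\<rho> < 1"
    unfolding \<rho>_def using assms by (simp, intro power_Suc_less_one) auto
  have node_power: "jackson_node q n ^ Suc l = \<rho> * \<rho> ^ n" for n
  proof -
    have "jackson_node q n ^ Suc l = \<rho> ^ Suc n"
      unfolding jackson_node_def \<rho>_def power_mult[symmetric] by (simp only: mult.commute)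
    then show ?thesis
      by simp
  qed
  have "(\<lambda>n. (q - 1) * \<rho> * \<rho> ^ n) sums ((q - 1) * \<rho> * (1 / (1 - \<rho>)))"
    using \<rho> by (intro sums_mult geometric_sums) auto
  moreover have "(q - 1) * \<rho> * (1 / (1 - \<rho>)) = (q - 1) / (q ^ Suc l - 1)"
    using assms \<rho> by (simp add: \<rho>_def power_one_over field_simps)
  ultimately have "(\<lambda>n. (q - 1) * jackson_node q n ^ Suc l) sums ((q - 1) / (q ^ Suc l - 1))"
    by (simp only: node_power mult.assoc)
  then show ?thesis
    using assms jackson_node_pos[of q] by (intro sums_nonneg_imp_has_sum) (auto simp: less_imp_le)
qed

(* The Jackson sum is geometric with ratio q powr (s - 1); this is where Re s < 1 enters. *)
lemma jackson_term_powr_sums: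
  fixes s :: complex
  assumes q: "q > 1" and s: "Re s < 1"
  shows "jackson_term q (\<lambda>a. 1 / of_real a powr s) sums (1 / qnum q (1 - s))"
proof -
  define \<rho> where "\<rho> = exp ((s - 1) * of_real (ln q))"
  have "norm \<rho> < 1"
    using q s by (simp add: \<rho>_def norm_exp_eq_Re mult_neg_pos)
  have jackson_term_eq: "jackson_term q (\<lambda>a. 1 / of_real a powr s) n = of_real (q - 1) * \<rho> * \<rho> ^ n" for n
  proof -
    define x where "x = jackson_node q n"
    have "x > 0"
      using q by (simp add: x_def jackson_node_pos)
    have "ln x = - (real (Suc n) * ln q)"
      using q by (simp add: x_def jackson_node_def ln_div ln_realpow algebra_simps)
    have "of_real x * (1 / (of_real x :: complex) powr s) = of_real x powr (1 - s)"
      using \<open>x > 0\<close> by (simp add: powr_diff)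
    also have "\<dots> = exp ((1 - s) * of_real (ln x))"
      using \<open>x > 0\<close> by (simp add: powr_def Ln_of_real)
    also have "(1 - s) * of_real (ln x) = of_nat (Suc n) * ((s - 1) * of_real (ln q))"
      unfolding \<open>ln x = _\<close> by (simp add: algebra_simps)
    also have "exp (of_nat (Suc n) * ((s - 1) * of_real (ln q))) = \<rho> ^ Suc n"
      unfolding \<rho>_def by (rule exp_of_nat_mult)
    finally show ?thesis
      using q by (simp only: jackson_term_node x_def[symmetric] of_real_mult mult.assoc power_Suc)
  qed
  have "(\<lambda>n. of_real (q - 1) * \<rho> * \<rho> ^ n) sums (of_real (q - 1) * \<rho> * (1 / (1 - \<rho>)))"
    by (intro sums_mult geometric_sums \<open>norm \<rho> < 1\<close>)
  moreover have "of_real (q - 1) * \<rho> * (1 / (1 - \<rho>)) = 1 / qnum q (1 - s)"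
  proof -
    have q_powr: "(of_real q :: complex) powr (1 - s) = 1 / \<rho>"
      using q by (simp add: powr_def Ln_of_real \<rho>_def exp_minus[symmetric] divide_inverse algebra_simps)
    have "(of_real q :: complex) \<noteq> 1" and "\<rho> \<noteq> 0"
      using q by (auto simp: \<rho>_def)
    moreover have "\<rho> \<noteq> 1"
      using \<open>norm \<rho> < 1\<close> by auto
    ultimately show ?thesis
      unfolding qnum_def q_powr by (simp add: field_simps)
  qed
  ultimately show ?thesis
    by (simp add: jackson_term_eq[abs_def])
qed

section \<open>Binomial expansion of a shifted Dirichlet series\<close>

lemma summable_norm_gchoose_power:
  fixes a :: complex and r :: real
  assumes "0 \<le> r" and "r < 1"
  shows "summable (\<lambda>n. norm (a gchoose n) * r ^ n)"
proof -
  define x :: complex where "x = of_real ((1 + r) / 2)"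
  have "norm x = (1 + r) / 2"
    unfolding x_def norm_of_real using assms by simp
  then have "norm x < 1" and "r < norm x"
    using assms by auto
  moreover have "summable (\<lambda>n. (a gchoose n) * x ^ n)"
    using gen_binomial_complex[OF \<open>norm x < 1\<close>] sums_summable by blast
  ultimately show ?thesis
    using powser_insidea[of "\<lambda>n. a gchoose n" x "of_real r"] assms
    by (simp add: norm_mult norm_power)
qed

lemma summable_on_product_nonneg:
  fixes f :: "'a \<Rightarrow> real" and g :: "'b \<Rightarrow> real"
  assumes "f summable_on A" and "g summable_on B"
    and "\<And>x. x \<in> A \<Longrightarrow> f x \<ge> 0" and "\<And>y. y \<in> B \<Longrightarrow> g y \<ge> 0"
  shows "(\<lambda>(x, y). f x * g y) summable_on A \<times> B"
proof -
  have "(\<lambda>p. f (fst p) * g (snd p)) summable_on Sigma A (\<lambda>_. B)"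
  proof (rule summable_on_SigmaI[where g = "\<lambda>x. f x * infsum g B"])
    show "((\<lambda>y. f (fst (x, y)) * g (snd (x, y))) has_sum f x * infsum g B) B" for x
      using has_sum_cmult_right[OF has_sum_infsum[OF assms(2)]] by simp
    show "(\<lambda>x. f x * infsum g B) summable_on A"
      using summable_on_cmult_left[OF assms(1)] .
  qed (use assms in auto)
  then show ?thesis by (simp add: case_prod_unfold)
qed

context
  fixes q e :: real and s :: complex and w :: "'i \<Rightarrow> complex" and B :: "'i \<Rightarrow> real"
    and I :: "'i set"
  assumes q_gt_1: "q > 1" and e_bound: "\<bar>e\<bar> \<le> 1" and B_ge_1: "\<And>i. i \<in> I \<Longrightarrow> 1 \<le> B i"
    and majorant_summable: "(\<lambda>i. norm (w i) * B i powr (- Re s)) summable_on I"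
begin

(* Term (node n, binomial power l, index i) of the Jackson sum of G a = (\<Sum>i. w i / (B i + e a) powr s)
   after expanding (B i + e x) powr -s binomially at the node x. *)
definition binomial_jackson_term :: "nat \<Rightarrow> nat \<Rightarrow> 'i \<Rightarrow> complex" where
  "binomial_jackson_term n l i =
     of_real ((q - 1) * jackson_node q n) * w i *
     (((- s) gchoose l) * of_real (e * jackson_node q n) ^ l * of_real (B i) powr (- s - of_nat l))"

lemma norm_binomial_jackson_term_le:
  assumes "i \<in> I"
  shows "norm (binomial_jackson_term n l i) \<le>
    (q - 1) * jackson_node q n * ((norm ((- s) gchoose l) * (1 / q) ^ l) * (norm (w i) * B i powr (- Re s)))"
proof -
  define x where "x = jackson_node q n"
  have x: "0 < x" "x \<le> 1 / q"
    using q_gt_1 by (simp_all add: x_def jackson_node_pos jackson_node_le)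
  have "\<bar>e\<bar> * x \<le> 1 * (1 / q)"
    using e_bound x by (intro mult_mono) auto
  then have "(\<bar>e\<bar> * x) ^ l \<le> (1 / q) ^ l"
    using x by (intro power_mono) auto
  then have "norm (of_real (e * x) ^ l :: complex) \<le> (1 / q) ^ l"
    using x by (simp add: norm_power norm_mult abs_mult)
  moreover have "norm (of_real (B i) powr (- s - of_nat l) :: complex) \<le> B i powr (- Re s)"
    using B_ge_1[OF assms] by (simp add: norm_powr_real_powr powr_mono)
  ultimately have "norm (((- s) gchoose l) * of_real (e * x) ^ l * of_real (B i) powr (- s - of_nat l))
      \<le> norm ((- s) gchoose l) * (1 / q) ^ l * B i powr (- Re s)"
    unfolding norm_mult using q_gt_1 by (intro mult_mono mult_left_mono) auto
  moreover have "norm (of_real ((q - 1) * x) :: complex) = (q - 1) * x"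
    unfolding norm_of_real using q_gt_1 x by simp
  ultimately show ?thesis
    using q_gt_1 x unfolding binomial_jackson_term_def x_def[symmetric] norm_mult
    by (simp add: mult_left_mono mult_ac)
qed

lemma binomial_jackson_term_summable:
  "(\<lambda>(n, l, i). binomial_jackson_term n l i) summable_on UNIV \<times> (UNIV \<times> I)"
proof -
  have nodes: "(\<lambda>n. (q - 1) * jackson_node q n) summable_on UNIV"
    using has_sum_jackson_node_power[OF q_gt_1, of 0] by (auto simp: summable_on_def)
  have "summable (\<lambda>l. norm ((- s) gchoose l) * (1 / q) ^ l)"
    using q_gt_1 by (intro summable_norm_gchoose_power) auto
  then have powers: "(\<lambda>l. norm ((- s) gchoose l) * (1 / q) ^ l) summable_on UNIV"
    using q_gt_1 by (subst summable_on_UNIV_nonneg_real_iff) auto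
  have "(\<lambda>(l, i). norm ((- s) gchoose l) * (1 / q) ^ l * (norm (w i) * B i powr (- Re s)))
          summable_on UNIV \<times> I"
    using q_gt_1 by (intro summable_on_product_nonneg powers majorant_summable) auto
  then have majorant: "(\<lambda>(n, p). (q - 1) * jackson_node q n *
      (case p of (l, i) \<Rightarrow> norm ((- s) gchoose l) * (1 / q) ^ l * (norm (w i) * B i powr (- Re s))))
      summable_on UNIV \<times> (UNIV \<times> I)"
    using q_gt_1 jackson_node_pos[of q]
    by (intro summable_on_product_nonneg[OF nodes]) (auto simp: less_imp_le)
  have "(\<lambda>x. norm (case x of (n, l, i) \<Rightarrow> binomial_jackson_term n l i)) summable_on UNIV \<times> (UNIV \<times> I)"
    by (rule Infinite_Sum.abs_summable_on_comparison_test'[OF majorant])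
       (auto intro: norm_binomial_jackson_term_le)
  then show ?thesis
    by (rule abs_summable_summable)
qed

lemma binomial_jackson_term_summable_powers_first:
  "(\<lambda>(l, n, i). binomial_jackson_term n l i) summable_on UNIV \<times> (UNIV \<times> I)"
  using binomial_jackson_term_summable
  by (subst summable_on_reindex_bij_witness[where i = "\<lambda>(n, l, i). (l, n, i)" and j = "\<lambda>(l, n, i). (n, l, i)"])
     auto

lemma has_sum_binomial_jackson_term_powers:
  assumes "i \<in> I"
  shows "((\<lambda>l. binomial_jackson_term n l i) has_sum
           of_real ((q - 1) * jackson_node q n) * (w i / of_real (B i + e * jackson_node q n) powr s)) UNIV"
proof -
  define x where "x = jackson_node q n"
  have x: "0 < x" "x \<le> 1 / q"
    using q_gt_1 by (simp_all add: x_def jackson_node_pos jackson_node_le)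
  have "\<bar>e * x\<bar> \<le> 1 * (1 / q)"
    unfolding abs_mult using e_bound x by (intro mult_mono) auto
  moreover have "1 / q < 1"
    using q_gt_1 by simp
  ultimately have "\<bar>e * x\<bar> < \<bar>B i\<bar>"
    using B_ge_1[OF assms] by linarith
  from sums_mult[OF gen_binomial_complex'[OF this, of "- s"], of "of_real ((q - 1) * x) * w i"]
  have "(\<lambda>l. binomial_jackson_term n l i) sums
          (of_real ((q - 1) * x) * w i * of_real (e * x + B i) powr (- s))"
    by (simp add: binomial_jackson_term_def x_def mult.assoc)
  moreover have "summable (\<lambda>l. norm (binomial_jackson_term n l i))"
  proof (rule summable_comparison_test)
    have "summable (\<lambda>l. norm ((- s) gchoose l) * (1 / q) ^ l)"
      using q_gt_1 by (intro summable_norm_gchoose_power) auto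
    then show "summable (\<lambda>l. (q - 1) * jackson_node q n *
        ((norm ((- s) gchoose l) * (1 / q) ^ l) * (norm (w i) * B i powr (- Re s))))"
      by (intro summable_mult summable_mult2)
  qed (use norm_binomial_jackson_term_le[OF assms] in auto)
  moreover have "w i * of_real (e * x + B i) powr (- s) = w i / of_real (B i + e * x) powr s"
    by (simp add: powr_minus divide_inverse add.commute)
  ultimately show ?thesis
    by (simp add: norm_summable_imp_has_sum x_def mult.assoc)
qed

lemma summable_on_weighted_powr:
  "(\<lambda>i. w i / of_real (B i) powr (s + of_nat l)) summable_on I"
proof -
  have "norm (w i / of_real (B i) powr (s + of_nat l)) \<le> norm (w i) * B i powr (- Re s)" if "i \<in> I" for i
  proof -
    have "norm (of_real (B i) powr (s + of_nat l) :: complex) = B i powr (Re s + real l)"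
      using B_ge_1[OF that] by (simp add: norm_powr_real_powr)
    moreover have "- Re s - real l = - (Re s + real l)"
      by simp
    ultimately have "norm (w i / of_real (B i) powr (s + of_nat l)) = norm (w i) * B i powr (- Re s - real l)"
      by (simp only: norm_mult norm_inverse powr_minus divide_inverse)
    also have "\<dots> \<le> norm (w i) * B i powr (- Re s)"
      using B_ge_1[OF that] by (intro mult_left_mono powr_mono) auto
    finally show ?thesis .
  qed
  then have "(\<lambda>i. norm (w i / of_real (B i) powr (s + of_nat l))) summable_on I"
    by (rule Infinite_Sum.abs_summable_on_comparison_test'[OF majorant_summable])
  then show ?thesis
    by (rule abs_summable_summable)
qed

lemma has_sum_binomial_jackson_term_nodes:
  "((\<lambda>(n, i). binomial_jackson_term n l i) has_sum
     of_real e ^ l * ((- s) gchoose l) * infsum (\<lambda>i. w i / of_real (B i) powr (s + of_nat l)) I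
       / qnum q (of_nat (l + 1))) (UNIV \<times> I)"
proof (rule has_sum_SigmaI)
  define L where "L = infsum (\<lambda>i. w i / of_real (B i) powr (s + of_nat l)) I"
  define c where "c n = of_real e ^ l * ((- s) gchoose l) * of_real ((q - 1) * jackson_node q n ^ Suc l)" for n
  show "((\<lambda>i. case (n, i) of (n, i) \<Rightarrow> binomial_jackson_term n l i) has_sum c n * L) I" for n
  proof -
    have "(of_real (B i) :: complex) powr (- s - of_nat l) = inverse (of_real (B i) powr (s + of_nat l))"
      for i by (metis minus_add_distrib powr_minus diff_conv_add_uminus)
    then have "binomial_jackson_term n l i = c n * (w i / of_real (B i) powr (s + of_nat l))" for i
      unfolding binomial_jackson_term_def c_def of_real_mult of_real_power power_mult_distrib power_Suc
        divide_inverse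
      by (simp only: mult_ac)
    then show ?thesis
      unfolding L_def using has_sum_cmult_right[OF has_sum_infsum[OF summable_on_weighted_powr], of "c n"]
      by simp
  qed
  have "((\<lambda>n. of_real ((q - 1) * jackson_node q n ^ Suc l)) has_sum
      (of_real ((q - 1) / (q ^ Suc l - 1)) :: complex)) UNIV"
    by (intro has_sum_of_real has_sum_jackson_node_power q_gt_1)
  moreover have "of_real ((q - 1) / (q ^ Suc l - 1)) = 1 / qnum q (of_nat (l + 1))"
    using q_gt_1 qnum_of_nat[of q "l + 1"] by simp
  ultimately have "((\<lambda>n. of_real e ^ l * ((- s) gchoose l) * L * of_real ((q - 1) * jackson_node q n ^ Suc l))
      has_sum of_real e ^ l * ((- s) gchoose l) * L * (1 / qnum q (of_nat (l + 1)))) UNIV"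
    by (intro has_sum_cmult_right) simp
  then show "((\<lambda>n. c n * L) has_sum
      of_real e ^ l * ((- s) gchoose l) * L / qnum q (of_nat (l + 1))) UNIV"
    by (simp add: c_def mult_ac)
  show "(\<lambda>(n, i). binomial_jackson_term n l i) summable_on UNIV \<times> I"
    using summable_on_SigmaD1[where f = "\<lambda>l (n, i). binomial_jackson_term n l i",
        OF binomial_jackson_term_summable_powers_first]
    by simp
qed

(* Absolute convergence of the triple series lets us sum it node-first (the Jackson sum) or
   power-first (the series in the q-numbers). *)
lemma jackson_integral_shifted_series:
  defines "G \<equiv> \<lambda>a. infsum (\<lambda>i. w i / of_real (B i + e * a) powr s) I"
  shows "jackson_integrable q G"
    and "(\<lambda>l. of_real e ^ l * ((- s) gchoose l) * infsum (\<lambda>i. w i / of_real (B i) powr (s + of_nat l)) I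
           / qnum q (of_nat (l + 1))) sums jackson_integral q G"
proof -
  define S where "S = infsum (\<lambda>(n, l, i). binomial_jackson_term n l i) (UNIV \<times> (UNIV \<times> I))"
  have triple: "((\<lambda>(n, l, i). binomial_jackson_term n l i) has_sum S) (UNIV \<times> (UNIV \<times> I))"
    unfolding S_def using binomial_jackson_term_summable by (rule has_sum_infsum)
  have node: "((\<lambda>(l, i). binomial_jackson_term n l i) has_sum jackson_term q G n) (UNIV \<times> I)" for n
  proof -
    define x where "x = jackson_node q n"
    define v where "v i = of_real ((q - 1) * x) * (w i / of_real (B i + e * x) powr s)" for i
    have "jackson_term q G n = of_real ((q - 1) * x) * G x"
      using q_gt_1 by (simp add: jackson_term_node x_def)
    also have "\<dots> = infsum v I"
      unfolding G_def v_def by (rule infsum_cmult_right'[symmetric])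
    finally have jackson_term_eq: "jackson_term q G n = infsum v I" .
    define S\<^sub>n where "S\<^sub>n = infsum (\<lambda>(l, i). binomial_jackson_term n l i) (UNIV \<times> I)"
    have "(\<lambda>(l, i). binomial_jackson_term n l i) summable_on UNIV \<times> I"
      using summable_on_SigmaD1[where f = "\<lambda>n (l, i). binomial_jackson_term n l i",
          OF binomial_jackson_term_summable]
      by simp
    then have sum_node: "((\<lambda>(l, i). binomial_jackson_term n l i) has_sum S\<^sub>n) (UNIV \<times> I)"
      unfolding S\<^sub>n_def by (rule has_sum_infsum)
    then have "((\<lambda>(i, l). binomial_jackson_term n l i) has_sum S\<^sub>n) (I \<times> UNIV)"
      by (subst (asm) has_sum_swap) simp
    then have "(v has_sum S\<^sub>n) I"
      by (rule has_sum_SigmaD) (simp only: prod.case v_def x_def has_sum_binomial_jackson_term_powers)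
    then show ?thesis
      using sum_node by (simp add: jackson_term_eq infsumI)
  qed
  have "(jackson_term q G has_sum S) UNIV"
    by (rule has_sum_SigmaD[OF triple]) (use node in simp)
  then have "jackson_term q G sums S"
    by (rule has_sum_imp_sums)
  then show "jackson_integrable q G"
    by (rule jackson_integral_sumsI)
  have integral: "jackson_integral q G = S"
    using \<open>jackson_term q G sums S\<close> by (rule jackson_integral_sumsI)
  have "((\<lambda>(l, n, i). binomial_jackson_term n l i) has_sum S) (UNIV \<times> (UNIV \<times> I))"
    using triple
    by (subst has_sum_reindex_bij_witness[where i = "\<lambda>(l, n, i). (n, l, i)" and j = "\<lambda>(n, l, i). (l, n, i)"])
       auto
  then have "((\<lambda>l. of_real e ^ l * ((- s) gchoose l) * infsum (\<lambda>i. w i / of_real (B i) powr (s + of_nat l)) I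
           / qnum q (of_nat (l + 1))) has_sum S) UNIV"
    by (rule has_sum_SigmaD) (use has_sum_binomial_jackson_term_nodes in simp)
  then show "(\<lambda>l. of_real e ^ l * ((- s) gchoose l) * infsum (\<lambda>i. w i / of_real (B i) powr (s + of_nat l)) I
           / qnum q (of_nat (l + 1))) sums jackson_integral q G"
    unfolding integral by (rule has_sum_imp_sums)
qed

end

section \<open>Counting tuples with a given sum\<close>

definition tuples_with_sum :: "(nat \<Rightarrow> bool) \<Rightarrow> nat \<Rightarrow> nat \<Rightarrow> nat list set" where
  "tuples_with_sum P k N = {m. length m = k \<and> (\<forall>x\<in>set m. P x) \<and> sum_list m = N}"

lemma finite_sum_list_fibre:
  fixes A :: "nat list set"
  assumes "A \<subseteq> {m. length m = k}"
  shows "finite {m \<in> A. sum_list m = N}"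
proof (rule finite_subset[OF _ finite_lists_length_eq[of "{0..N}" k]])
  show "{m \<in> A. sum_list m = N} \<subseteq> {xs. set xs \<subseteq> {0..N} \<and> length xs = k}"
    using assms member_le_sum_list by fastforce
qed simp

lemma finite_tuples_with_sum: "finite (tuples_with_sum P k N)"
  unfolding tuples_with_sum_def
  by (rule finite_subset[OF _ finite_sum_list_fibre[of "{m. length m = k}" k N]]) auto

lemma card_tuples_with_sum_Suc:
  "card (tuples_with_sum P (Suc k) N) = (\<Sum>n\<le>N. if P n then card (tuples_with_sum P k (N - n)) else 0)"
proof -
  let ?A = "{n \<in> {..N}. P n}"
  have "bij_betw (\<lambda>m. (hd m, tl m)) (tuples_with_sum P (Suc k) N)
          (Sigma ?A (\<lambda>n. tuples_with_sum P k (N - n)))"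
  proof (rule bij_betwI[where g = "\<lambda>(n, m). n # m"])
    show "(\<lambda>m. (hd m, tl m)) \<in> tuples_with_sum P (Suc k) N \<rightarrow> Sigma ?A (\<lambda>n. tuples_with_sum P k (N - n))"
    proof
      fix m assume "m \<in> tuples_with_sum P (Suc k) N"
      then show "(hd m, tl m) \<in> Sigma ?A (\<lambda>n. tuples_with_sum P k (N - n))"
        by (cases m) (auto simp: tuples_with_sum_def)
    qed
    show "(case (hd m, tl m) of (n, m) \<Rightarrow> n # m) = m" if "m \<in> tuples_with_sum P (Suc k) N" for m
      using that by (cases m) (auto simp: tuples_with_sum_def)
  qed (auto simp: tuples_with_sum_def)
  then have "card (tuples_with_sum P (Suc k) N) = card (Sigma ?A (\<lambda>n. tuples_with_sum P k (N - n)))"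
    by (rule bij_betw_same_card)
  also have "\<dots> = (\<Sum>n\<in>?A. card (tuples_with_sum P k (N - n)))"
    by (rule card_SigmaI) (auto simp: finite_tuples_with_sum)
  also have "\<dots> = (\<Sum>n\<le>N. if P n then card (tuples_with_sum P k (N - n)) else 0)"
    by (rule sum.inter_filter) simp
  finally show ?thesis .
qed

lemma sum_choose_Suc_eq:
  fixes a :: "nat \<Rightarrow> nat"
  shows "(\<Sum>j\<le>Suc k. (Suc k choose j) * a j) = (\<Sum>j\<le>k. (k choose j) * (a j + a (Suc j)))"
proof -
  have "(\<Sum>j\<le>Suc k. (Suc k choose j) * a j) =
        (\<Sum>j\<le>Suc k. (k choose j) * a j) + (\<Sum>j\<le>Suc k. if j = 0 then 0 else (k choose (j - 1)) * a j)"
    by (subst sum.distrib[symmetric], rule sum.cong)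
       (auto split: nat.splits simp: algebra_simps dest!: gr0_implies_Suc)
  also have "(\<Sum>j\<le>Suc k. (k choose j) * a j) = (\<Sum>j\<le>k. (k choose j) * a j)"
    by simp
  also have "(\<Sum>j\<le>Suc k. if j = 0 then 0 else (k choose (j - 1)) * a j) = (\<Sum>j\<le>k. (k choose j) * a (Suc j))"
    by (subst sum.atMost_Suc_shift) simp
  finally show ?thesis
    by (simp add: sum.distrib algebra_simps)
qed

lemma card_tuples_with_sum_binomial:
  "card (tuples_with_sum (\<lambda>_. True) k N) = (\<Sum>j\<le>k. (k choose j) * card (tuples_with_sum (\<lambda>x. 1 \<le> x) j N))"
proof (induction k arbitrary: N)
  case 0
  have "tuples_with_sum P 0 N = (if N = 0 then {[]} else {})" for P
    by (auto simp: tuples_with_sum_def)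
  then show ?case
    by simp
next
  case (Suc k)
  define a where "a j = card (tuples_with_sum (\<lambda>x. 1 \<le> x) j N)" for j
  have split_first: "(\<Sum>n\<le>N. card (tuples_with_sum (\<lambda>x. 1 \<le> x) j (N - n))) = a j + a (Suc j)" for j
  proof -
    have "(\<Sum>n\<le>N. card (tuples_with_sum (\<lambda>x. 1 \<le> x) j (N - n))) =
          (\<Sum>n\<le>N. (if n = 0 then card (tuples_with_sum (\<lambda>x. 1 \<le> x) j (N - n)) else 0) +
                   (if 1 \<le> n then card (tuples_with_sum (\<lambda>x. 1 \<le> x) j (N - n)) else 0))"
      by (rule sum.cong) auto
    also have "\<dots> = a j + a (Suc j)"
      by (simp only: sum.distrib card_tuples_with_sum_Suc a_def) simp
    finally show ?thesis .
  qed
  have "card (tuples_with_sum (\<lambda>_. True) (Suc k) N) =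
        (\<Sum>n\<le>N. \<Sum>j\<le>k. (k choose j) * card (tuples_with_sum (\<lambda>x. 1 \<le> x) j (N - n)))"
    by (simp add: card_tuples_with_sum_Suc Suc.IH)
  also have "\<dots> = (\<Sum>j\<le>k. (k choose j) * (\<Sum>n\<le>N. card (tuples_with_sum (\<lambda>x. 1 \<le> x) j (N - n))))"
    by (subst sum.swap) (simp add: sum_distrib_left)
  also have "\<dots> = (\<Sum>j\<le>k. (k choose j) * (a j + a (Suc j)))"
    by (simp only: split_first)
  also have "\<dots> = (\<Sum>j\<le>Suc k. (Suc k choose j) * a j)"
    by (rule sum_choose_Suc_eq[symmetric])
  finally show ?case
    by (simp add: a_def)
qed

lemma card_tuples_with_sum_positive_parts:
  assumes "N \<ge> 1"
  shows "card (tuples_with_sum (\<lambda>_. True) k N) =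
           (\<Sum>r<k. (k choose r) * card (tuples_with_sum (\<lambda>x. 1 \<le> x) (k - r) N))"
proof -
  define a where "a j = card (tuples_with_sum (\<lambda>x. 1 \<le> x) j N)" for j
  have "a 0 = 0"
    using assms by (simp add: a_def tuples_with_sum_def)
  have "(\<Sum>r<k. (k choose r) * a (k - r)) = (\<Sum>i<k. (k choose Suc i) * a (Suc i))"
    by (subst sum.nat_diff_reindex[symmetric])
       (rule sum.cong, auto simp: Suc_diff_Suc binomial_symmetric[symmetric])
  also have "\<dots> = (\<Sum>j\<le>k. (k choose j) * a j)"
    using \<open>a 0 = 0\<close> by (cases k) (simp_all only: sum.atMost_Suc_shift lessThan_Suc_atMost, simp_all)
  finally show ?thesis
    using card_tuples_with_sum_binomial[of k N] by (simp add: a_def)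
qed

(* A tuple with sum N is determined by its tail, whose entries lie in {0..N}. *)
lemma card_sum_list_fibre_le:
  "card {m. length m = k \<and> sum_list m = N} \<le> (N + 1) ^ (k - 1)"
proof (cases k)
  case 0
  then have "{m. length m = k \<and> sum_list m = N} \<subseteq> {[]}"
    by auto
  then have "card {m. length m = k \<and> sum_list m = N} \<le> card {[] :: nat list}"
    by (intro card_mono) auto
  then show ?thesis
    using 0 by simp
next
  case (Suc k')
  let ?S = "{m. length m = k \<and> sum_list m = N}"
  let ?T = "{xs. set xs \<subseteq> {0..N} \<and> length xs = k'}"
  have "inj_on tl ?S"
  proof (rule inj_onI)
    fix x y assume x: "x \<in> ?S" and y: "y \<in> ?S" and "tl x = tl y"
    from x Suc obtain a x' where "x = a # x'"
      by (cases x) auto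
    moreover from y Suc obtain b y' where "y = b # y'"
      by (cases y) auto
    ultimately show "x = y"
      using x y \<open>tl x = tl y\<close> by auto
  qed
  moreover have "tl ` ?S \<subseteq> ?T"
  proof
    fix t assume "t \<in> tl ` ?S"
    then obtain m where m: "m \<in> ?S" "t = tl m"
      by auto
    have "set (tl m) \<subseteq> set m"
      by (cases m) auto
    then show "t \<in> ?T"
      using m member_le_sum_list Suc by fastforce
  qed
  then have "card (tl ` ?S) \<le> card ?T"
    by (intro card_mono finite_lists_length_eq) auto
  ultimately show ?thesis
    using Suc by (simp add: card_image card_lists_length_eq)
qed

section \<open>Series over tuples\<close>

lemma has_sum_sum:
  fixes f :: "'r \<Rightarrow> 'a \<Rightarrow> 'b::topological_comm_monoid_add"
  assumes "finite R" and "\<And>r. r \<in> R \<Longrightarrow> (f r has_sum S r) A"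
  shows "((\<lambda>x. \<Sum>r\<in>R. f r x) has_sum (\<Sum>r\<in>R. S r)) A"
  using assms by (induction R rule: finite_induct) (auto intro: has_sum_add)

lemma has_sum_fibre_counts:
  fixes g :: "'a \<Rightarrow> 'b" and h :: "'b \<Rightarrow> 'c::{topological_comm_monoid_add, t3_space, semiring_1}"
  assumes finite_fibres: "\<And>y. finite {x \<in> A. g x = y}"
    and sum: "((\<lambda>x. h (g x)) has_sum S) A"
  shows "((\<lambda>y. of_nat (card {x \<in> A. g x = y}) * h y) has_sum S) UNIV"
proof -
  define F where "F y = {x \<in> A. g x = y}" for y
  have bij: "bij_betw (\<lambda>x. (g x, x)) A (Sigma UNIV F)"
    by (rule bij_betwI[where g = snd]) (auto simp: F_def)
  then have "((\<lambda>p. h (fst p)) has_sum S) (Sigma UNIV F)"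
    using has_sum_reindex_bij_betw[OF bij, of "\<lambda>p. h (fst p)" S] sum by simp
  then show ?thesis
    by (rule has_sum_SigmaD) (simp add: F_def finite_fibres)
qed

lemma summable_on_of_fibre_counts:
  fixes g :: "'a \<Rightarrow> 'b" and h :: "'b \<Rightarrow> real"
  assumes finite_fibres: "\<And>y. finite {x \<in> A. g x = y}" and nonneg: "\<And>y. h y \<ge> 0"
    and summable: "(\<lambda>y. real (card {x \<in> A. g x = y}) * h y) summable_on UNIV"
  shows "(\<lambda>x. h (g x)) summable_on A"
proof -
  define F where "F y = {x \<in> A. g x = y}" for y
  have bij: "bij_betw (\<lambda>x. (g x, x)) A (Sigma UNIV F)"
    by (rule bij_betwI[where g = snd]) (auto simp: F_def)
  have "(\<lambda>p. h (fst p)) summable_on Sigma UNIV F"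
  proof (rule summable_on_SigmaI[where g = "\<lambda>y. real (card (F y)) * h y"])
    show "((\<lambda>x. h (fst (y, x))) has_sum real (card (F y)) * h y) (F y)" for y
      using has_sum_constant[OF finite_fibres[of y], of "h y"] by (simp add: F_def)
  qed (use summable nonneg in \<open>auto simp: F_def\<close>)
  then show ?thesis
    using summable_on_reindex_bij_betw[OF bij, of "\<lambda>p. h (fst p)"] by simp
qed

lemma summable_powr_times_geometric:
  fixes x a b d :: real
  assumes "0 \<le> x" and "x < 1"
  shows "summable (\<lambda>N. (real N + 1) powr a * (real N + d) powr b * x ^ N)"
proof -
  define p where "p N = (real N + 1) powr a * (real N + d) powr b" for N
  have p_nonneg: "p N \<ge> 0" for N
    by (simp add: p_def)
  define y where "y = (1 + x) / 2"
  define r where "r = y / ((1 + y) / 2)"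
  have y: "x \<le> y" "0 < y" "y < 1"
    using assms by (auto simp: y_def)
  then have r: "0 < r" "r < 1"
    by (simp_all add: r_def)
  have "(\<lambda>N. (real N + 1) powr a * (real N + d) powr b * r ^ N) \<longlonglongrightarrow> 0"
    using r by real_asymp
  then have "eventually (\<lambda>N. p N * r ^ N < 1) sequentially"
    unfolding p_def by (rule order_tendstoD) simp
  then have "eventually (\<lambda>N. norm (p N * x ^ N) \<le> ((1 + y) / 2) ^ N) sequentially"
  proof eventually_elim
    case (elim N)
    have "norm (p N * x ^ N) \<le> p N * y ^ N"
      using assms y p_nonneg[of N] by (simp add: abs_mult mult_left_mono power_mono)
    also have "\<dots> = (p N * r ^ N) * ((1 + y) / 2) ^ N"
      using y by (simp add: r_def power_divide)
    also have "\<dots> \<le> ((1 + y) / 2) ^ N"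
      using elim y r p_nonneg[of N] by (intro mult_left_le_one_le) auto
    finally show ?case .
  qed
  then show ?thesis
    unfolding p_def[symmetric]
    by (rule summable_comparison_test_ev) (use y in \<open>auto intro: summable_geometric\<close>)
qed

lemma card_sum_list_fibre_le_powr:
  "real (card {m \<in> {m. length m = k}. sum_list m = N}) \<le> (real N + 1) powr real (k - 1)"
proof -
  have "{m \<in> {m. length m = k}. sum_list m = N} = {m. length m = k \<and> sum_list m = N}"
    by auto
  then have "real (card {m \<in> {m. length m = k}. sum_list m = N}) \<le> real ((N + 1) ^ (k - 1))"
    using card_sum_list_fibre_le[of k N] by (simp only: of_nat_le_iff)
  also have "\<dots> = (real N + 1) powr real (k - 1)"
    by (simp add: powr_realpow add.commute)
  finally show ?thesis .
qed

lemma summable_on_tuples_geometric: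
  fixes x c d :: real
  assumes "0 \<le> x" and "x < 1"
  shows "(\<lambda>m. x ^ sum_list m * (real (sum_list m) + d) powr c) summable_on {m. length m = k}"
proof (rule summable_on_of_fibre_counts[where h = "\<lambda>N. x ^ N * (real N + d) powr c"])
  have "summable (\<lambda>N. (real N + 1) powr real (k - 1) * (real N + d) powr c * x ^ N)"
    using assms by (rule summable_powr_times_geometric)
  then have "(\<lambda>N. (real N + 1) powr real (k - 1) * (real N + d) powr c * x ^ N) summable_on UNIV"
    using assms by (subst summable_on_UNIV_nonneg_real_iff) auto
  moreover have "real (card {m \<in> {m. length m = k}. sum_list m = N}) * (x ^ N * (real N + d) powr c)
      \<le> (real N + 1) powr real (k - 1) * (real N + d) powr c * x ^ N" for N
  proof -
    have "real (card {m \<in> {m. length m = k}. sum_list m = N}) * (x ^ N * (real N + d) powr c)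
        \<le> (real N + 1) powr real (k - 1) * (x ^ N * (real N + d) powr c)"
      using assms by (intro mult_right_mono card_sum_list_fibre_le_powr) auto
    then show ?thesis
      by (simp add: mult_ac)
  qed
  ultimately show "(\<lambda>N. real (card {m \<in> {m. length m = k}. sum_list m = N}) * (x ^ N * (real N + d) powr c))
      summable_on UNIV"
    by (rule summable_on_comparison_test) (use assms in simp)
  show "finite {m \<in> {m. length m = k}. sum_list m = N}" for N :: nat
    by (rule finite_sum_list_fibre[of _ k]) simp
qed (use assms in simp)

lemma summable_on_tuples_powr:
  fixes d \<sigma> :: real
  assumes "k \<ge> 1" and "d \<ge> 1" and "\<sigma> > real k"
  shows "(\<lambda>m. (real (sum_list m) + d) powr (- \<sigma>)) summable_on {m. length m = k}"
proof (rule summable_on_of_fibre_counts[where h = "\<lambda>N. (real N + d) powr (- \<sigma>)"])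
  define p where "p = real (k - 1) - \<sigma>"
  have "p < -1"
    using assms by (simp add: p_def of_nat_diff)
  then have "summable (\<lambda>N. real (Suc N) powr p)"
    using summable_real_powr_iff[of p] summable_Suc_iff[of "\<lambda>n. real n powr p"] by simp
  then have "(\<lambda>N. (real N + 1) powr p) summable_on UNIV"
    by (subst summable_on_UNIV_nonneg_real_iff) (auto simp: add.commute)
  moreover have "real (card {m \<in> {m. length m = k}. sum_list m = N}) * (real N + d) powr (- \<sigma>)
      \<le> (real N + 1) powr p" for N
  proof -
    have "real (card {m \<in> {m. length m = k}. sum_list m = N}) * (real N + d) powr (- \<sigma>)
        \<le> (real N + 1) powr real (k - 1) * (real N + 1) powr (- \<sigma>)"
      using assms by (intro mult_mono powr_mono2' card_sum_list_fibre_le_powr) auto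
    then show ?thesis
      by (simp add: p_def powr_add[symmetric])
  qed
  ultimately show "(\<lambda>N. real (card {m \<in> {m. length m = k}. sum_list m = N}) * (real N + d) powr (- \<sigma>))
      summable_on UNIV"
    by (rule summable_on_comparison_test) simp
  show "finite {m \<in> {m. length m = k}. sum_list m = N}" for N :: nat
    by (rule finite_sum_list_fibre[of _ k]) simp
qed simp

lemma powr_shift_le:
  fixes b a \<sigma> :: real
  assumes "b \<ge> 1" and "0 \<le> a" and "a \<le> 1"
  shows "(b + a) powr (- \<sigma>) \<le> 2 powr \<bar>\<sigma>\<bar> * b powr (- \<sigma>)"
proof (cases "\<sigma> \<ge> 0")
  case True
  have "(b + a) powr (- \<sigma>) \<le> b powr (- \<sigma>)"
    using assms True by (intro powr_mono2') auto
  also have "\<dots> \<le> 2 powr \<bar>\<sigma>\<bar> * b powr (- \<sigma>)"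
    using ge_one_powr_ge_zero[of 2 "\<bar>\<sigma>\<bar>"] by (simp add: mult_le_cancel_right1)
  finally show ?thesis .
next
  case False
  have "(b + a) powr (- \<sigma>) \<le> (2 * b) powr (- \<sigma>)"
    using assms False by (intro powr_mono2) auto
  also have "\<dots> = 2 powr \<bar>\<sigma>\<bar> * b powr (- \<sigma>)"
    using False assms by (simp add: powr_mult)
  finally show ?thesis .
qed

section \<open>Multiple Hurwitz-Lerch and Lipschitz-Lerch zeta functions\<close>

lemma multi_LL_zeta_shift:
  "multi_LL_zeta k z t =
     z ^ k * infsum (\<lambda>m. z ^ sum_list m / of_nat (sum_list m + k) powr t) {m. length m = k}"
proof -
  let ?P = "{m::nat list. length m = k \<and> (\<forall>i\<in>set m. 1 \<le> i)}"
  have bij: "bij_betw (map Suc) {m. length m = k} ?P"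
    by (rule bij_betwI[where g = "map (\<lambda>x. x - 1)"]) (auto intro!: map_idI)
  have "multi_LL_zeta k z t =
      infsum (\<lambda>m. z ^ sum_list (map Suc m) / of_nat (sum_list (map Suc m)) powr t) {m. length m = k}"
    unfolding multi_LL_zeta_def
    by (rule infsum_reindex_bij_betw[OF bij, of "\<lambda>m. z ^ sum_list m / of_nat (sum_list m) powr t", symmetric])
  also have "\<dots> = infsum (\<lambda>m. z ^ k * (z ^ sum_list m / of_nat (sum_list m + k) powr t)) {m. length m = k}"
    by (intro infsum_cong) (simp add: sum_list_Suc power_add mult_ac)
  also have "\<dots> = z ^ k * infsum (\<lambda>m. z ^ sum_list m / of_nat (sum_list m + k) powr t) {m. length m = k}"
    by (rule infsum_cmult_right')
  finally show ?thesis .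
qed

lemma length_le_sum_list: "\<forall>i\<in>set m. 1 \<le> i \<Longrightarrow> length m \<le> sum_list m"
  by (induction m) auto

lemma summable_on_tuples_norm_power:
  fixes z :: complex and A :: "nat list set"
  assumes "norm z < 1" and "A \<subseteq> {m. length m = k}"
  shows "(\<lambda>m. norm (z ^ sum_list m) * real (sum_list m) powr c) summable_on A"
proof -
  have "(\<lambda>m. norm z ^ sum_list m * (real (sum_list m) + 0) powr c) summable_on {m. length m = k}"
    using assms by (intro summable_on_tuples_geometric) auto
  then have "(\<lambda>m. norm z ^ sum_list m * (real (sum_list m) + 0) powr c) summable_on A"
    by (rule summable_on_subset_banach) (rule assms(2))
  then show ?thesis
    by (simp add: norm_power)
qed

lemma summable_multi_LL_zeta_series:
  fixes q :: real and z s :: complex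
  assumes q: "q > 1" and z: "norm z < 1" and j: "j \<ge> 1"
  shows "summable (\<lambda>l. ((- s) gchoose l) * multi_LL_zeta j z (s + of_nat l) / qnum q (of_nat (l + 1)))"
proof -
  let ?P = "{m::nat list. length m = j \<and> (\<forall>i\<in>set m. 1 \<le> i)}"
  have B: "1 \<le> real (sum_list m)" if "m \<in> ?P" for m
    using that j length_le_sum_list[of m] by auto
  have "(\<lambda>m. norm (z ^ sum_list m) * real (sum_list m) powr (- Re s)) summable_on ?P"
    using z by (rule summable_on_tuples_norm_power[where k = j]) auto
  from jackson_integral_shifted_series(2)[OF q _ B this, of 1]
  show ?thesis
    by (simp add: multi_LL_zeta_def sums_summable)
qed

lemma infsum_nonzero_tuples_eq_sum_multi_LL_zeta:
  fixes z t :: complex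
  assumes z: "norm z < 1"
  shows "infsum (\<lambda>m. z ^ sum_list m / of_nat (sum_list m) powr t) {m. length m = k \<and> 0 < sum_list m}
           = (\<Sum>r<k. of_nat (k choose r) * multi_LL_zeta (k - r) z t)"
proof -
  define h where "h N = z ^ N / (of_nat N :: complex) powr t" for N
  define I where "I = {m :: nat list. length m = k \<and> 0 < sum_list m}"
  define P where "P j = {m :: nat list. length m = j \<and> (\<forall>i\<in>set m. 1 \<le> i)}" for j
  define count :: "nat list set \<Rightarrow> nat \<Rightarrow> complex"
    where "count A N = of_nat (card {m \<in> A. sum_list m = N})" for A N
  have "(\<lambda>m. norm (z ^ sum_list m) * real (sum_list m) powr (- Re t)) summable_on {m. length m = j}" for j
    using z by (rule summable_on_tuples_norm_power[where k = j]) simp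
  then have "(\<lambda>m. norm (h (sum_list m))) summable_on {m. length m = j}" for j
    by (simp add: h_def norm_divide norm_powr_real_powr powr_minus_divide)
  then have summable: "(\<lambda>m. h (sum_list m)) summable_on {m. length m = j}" for j
    using summable_on_iff_abs_summable_on_complex by blast
  have counts: "((\<lambda>N. count A N * h N) has_sum infsum (\<lambda>m. h (sum_list m)) A) UNIV"
    if "A \<subseteq> {m. length m = j}" for A j
    unfolding count_def
    using finite_sum_list_fibre[OF that] summable_on_subset_banach[OF summable that]
    by (intro has_sum_fibre_counts has_sum_infsum)
  have "count I N * h N = (\<Sum>r<k. of_nat (k choose r) * (count (P (k - r)) N * h N))" for N
  proof (cases "N = 0")
    case True
    then show ?thesis
      by (simp add: h_def)
  next
    case False
    have "{m \<in> I. sum_list m = N} = tuples_with_sum (\<lambda>_. True) k N"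
      and "{m \<in> P j. sum_list m = N} = tuples_with_sum (\<lambda>x. 1 \<le> x) j N" for j
      using False by (auto simp: I_def P_def tuples_with_sum_def)
    then have "count I N = (\<Sum>r<k. of_nat (k choose r) * count (P (k - r)) N)"
      using card_tuples_with_sum_positive_parts[of N k] False unfolding count_def
      by (simp flip: of_nat_mult)
    then show ?thesis
      by (simp add: sum_distrib_right mult.assoc)
  qed
  moreover have "((\<lambda>N. \<Sum>r<k. of_nat (k choose r) * (count (P (k - r)) N * h N)) has_sum
      (\<Sum>r<k. of_nat (k choose r) * multi_LL_zeta (k - r) z t)) UNIV"
  proof (intro has_sum_sum has_sum_cmult_right)
    fix r
    have "multi_LL_zeta (k - r) z t = infsum (\<lambda>m. h (sum_list m)) (P (k - r))"
      by (simp add: multi_LL_zeta_def P_def h_def)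
    moreover have "P (k - r) \<subseteq> {m. length m = k - r}"
      by (auto simp: P_def)
    ultimately show "((\<lambda>N. count (P (k - r)) N * h N) has_sum multi_LL_zeta (k - r) z t) UNIV"
      using counts by simp
  qed simp
  ultimately have "((\<lambda>N. count I N * h N) has_sum (\<Sum>r<k. of_nat (k choose r) * multi_LL_zeta (k - r) z t)) UNIV"
    by simp
  moreover have "((\<lambda>N. count I N * h N) has_sum infsum (\<lambda>m. h (sum_list m)) I) UNIV"
    by (rule counts[of _ k]) (auto simp: I_def)
  ultimately show ?thesis
    by (simp add: I_def h_def has_sum_unique)
qed

lemma multi_HL_zeta_split_zero_tuple:
  fixes z s :: complex and a :: real
  assumes z: "norm z < 1" and a: "0 < a" "a \<le> 1"
  shows "multi_HL_zeta k z s (of_real a) =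
           1 / of_real a powr s +
           infsum (\<lambda>m. z ^ sum_list m / of_real (real (sum_list m) + a) powr s)
             {m. length m = k \<and> 0 < sum_list m}"
proof -
  define I where "I = {m :: nat list. length m = k \<and> 0 < sum_list m}"
  define f where "f m = z ^ sum_list m / (of_nat (sum_list m) + of_real a) powr s" for m
  have "norm (f m) \<le> 2 powr \<bar>Re s\<bar> * (norm (z ^ sum_list m) * real (sum_list m) powr (- Re s))"
    if "m \<in> I" for m
  proof -
    have "(of_nat (sum_list m) + of_real a :: complex) = of_real (real (sum_list m) + a)"
      by simp
    then have "norm (f m) = norm (z ^ sum_list m) * (real (sum_list m) + a) powr (- Re s)"
      unfolding f_def norm_divide
      by (subst norm_powr_real_powr) (use a in \<open>auto simp: powr_minus_divide\<close>)
    also have "\<dots> \<le> norm (z ^ sum_list m) * (2 powr \<bar>Re s\<bar> * real (sum_list m) powr (- Re s))"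
      using that a by (intro mult_left_mono powr_shift_le) (auto simp: I_def)
    finally show ?thesis
      by (simp add: mult_ac)
  qed
  moreover have "(\<lambda>m. norm (z ^ sum_list m) * real (sum_list m) powr (- Re s)) summable_on I"
    using z by (rule summable_on_tuples_norm_power[where k = k]) (auto simp: I_def)
  then have "(\<lambda>m. 2 powr \<bar>Re s\<bar> * (norm (z ^ sum_list m) * real (sum_list m) powr (- Re s)))
      summable_on I"
    by (rule summable_on_cmult_right)
  ultimately have "(\<lambda>m. norm (f m)) summable_on I"
    by (rule Infinite_Sum.abs_summable_on_comparison_test'[rotated])
  then have "f summable_on I"
    using summable_on_iff_abs_summable_on_complex by blast
  have "{m :: nat list. length m = k} = {replicate k 0} \<union> I"
    by (auto simp: I_def intro: replicate_eqI)
  then have "multi_HL_zeta k z s (of_real a) = infsum f ({replicate k 0} \<union> I)"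
    unfolding multi_HL_zeta_def f_def by simp
  also have "\<dots> = infsum f {replicate k 0} + infsum f I"
    using \<open>f summable_on I\<close> by (intro infsum_Un_disjoint) (auto simp: I_def)
  also have "infsum f {replicate k 0} = 1 / of_real a powr s"
    by (simp add: f_def sum_list_replicate)
  also have "infsum f I = infsum (\<lambda>m. z ^ sum_list m / of_real (real (sum_list m) + a) powr s) I"
    by (intro infsum_cong) (simp add: f_def)
  finally show ?thesis
    unfolding I_def .
qed

lemma jackson_integral_multi_HL_zeta:
  fixes q :: real and z s :: complex
  assumes q: "q > 1" and z: "norm z < 1" and s: "Re s < 1"
  shows "jackson_integrable q (\<lambda>a. multi_HL_zeta k z s (of_real a))"
    and "jackson_integral q (\<lambda>a. multi_HL_zeta k z s (of_real a)) =
           1 / qnum q (1 - s) +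
           (\<Sum>r<k. of_nat (k choose r) *
              (\<Sum>l. ((- s) gchoose l) * multi_LL_zeta (k - r) z (s + of_nat l) / qnum q (of_nat (l + 1))))"
    (is "_ = _ + (\<Sum>r<k. _ * suminf (?X r))")
proof -
  define I where "I = {m :: nat list. length m = k \<and> 0 < sum_list m}"
  define G where "G a = infsum (\<lambda>m. z ^ sum_list m / of_real (real (sum_list m) + 1 * a) powr s) I" for a
  have "(\<lambda>m. norm (z ^ sum_list m) * real (sum_list m) powr (- Re s)) summable_on I"
    using z by (rule summable_on_tuples_norm_power[where k = k]) (auto simp: I_def)
  moreover have "\<bar>1::real\<bar> \<le> 1" and "1 \<le> real (sum_list m)" if "m \<in> I" for m
    using that by (auto simp: I_def)
  ultimately have series: "jackson_integrable q G"
    "(\<lambda>l. of_real 1 ^ l * ((- s) gchoose l) *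
        infsum (\<lambda>m. z ^ sum_list m / of_real (real (sum_list m)) powr (s + of_nat l)) I
        / qnum q (of_nat (l + 1))) sums jackson_integral q G"
    unfolding G_def[abs_def] by (intro jackson_integral_shifted_series[OF q]; simp)+
  have "jackson_term q (\<lambda>a. multi_HL_zeta k z s (of_real a)) =
          (\<lambda>n. jackson_term q (\<lambda>a. 1 / of_real a powr s) n + jackson_term q G n)"
  proof
    fix n
    have "0 < jackson_node q n" and "jackson_node q n \<le> 1"
      using q jackson_node_le[of q n] by (simp_all add: jackson_node_pos order.trans[of _ "1 / q"])
    then show "jackson_term q (\<lambda>a. multi_HL_zeta k z s (of_real a)) n =
        jackson_term q (\<lambda>a. 1 / of_real a powr s) n + jackson_term q G n"
      using q z by (simp add: jackson_term_node multi_HL_zeta_split_zero_tuple G_def I_def algebra_simps)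
  qed
  moreover have "jackson_term q G sums jackson_integral q G"
    using series(1) by (simp add: jackson_integrable_def jackson_integral_def summable_sums)
  ultimately have jackson_sums: "jackson_term q (\<lambda>a. multi_HL_zeta k z s (of_real a)) sums
      (1 / qnum q (1 - s) + jackson_integral q G)"
    by (simp add: sums_add jackson_term_powr_sums[OF q s])
  then show "jackson_integrable q (\<lambda>a. multi_HL_zeta k z s (of_real a))"
    by (rule jackson_integral_sumsI)
  have "(\<lambda>l. \<Sum>r<k. of_nat (k choose r) * ?X r l) sums (\<Sum>r<k. of_nat (k choose r) * suminf (?X r))"
    by (intro sums_sum sums_mult summable_sums summable_multi_LL_zeta_series[OF q z]) simp
  moreover have "of_real 1 ^ l * ((- s) gchoose l) *
        infsum (\<lambda>m. z ^ sum_list m / of_real (real (sum_list m)) powr (s + of_nat l)) I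
        / qnum q (of_nat (l + 1)) = (\<Sum>r<k. of_nat (k choose r) * ?X r l)" for l
    using z by (simp add: I_def infsum_nonzero_tuples_eq_sum_multi_LL_zeta
                  sum_distrib_left sum_divide_distrib mult_ac)
  ultimately have "jackson_integral q G = (\<Sum>r<k. of_nat (k choose r) * suminf (?X r))"
    using series(2) sums_unique2 by force
  with jackson_sums show "jackson_integral q (\<lambda>a. multi_HL_zeta k z s (of_real a)) =
      1 / qnum q (1 - s) + (\<Sum>r<k. of_nat (k choose r) * (\<Sum>l. ?X r l))"
    by (simp add: jackson_integral_sumsI)
qed

lemma jackson_integral_multi_HL_zeta_shifted:
  fixes q e :: real and z s :: complex
  assumes q: "q > 1" and k: "k > 0" and z: "norm z < 1 \<or> norm z = 1 \<and> real k < Re s"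
    and e: "\<bar>e\<bar> \<le> 1"
  shows "jackson_integrable q (\<lambda>a. multi_HL_zeta k z s (of_nat k + of_real e * of_real a))"
    and "(\<lambda>l. of_real e ^ l * ((- s) gchoose l) * multi_LL_zeta k z (s + of_nat l) / qnum q (of_nat (l + 1)))
           sums (z ^ k * jackson_integral q (\<lambda>a. multi_HL_zeta k z s (of_nat k + of_real e * of_real a)))"
proof -
  let ?A = "{m :: nat list. length m = k}"
  have majorant: "(\<lambda>m. norm (z ^ sum_list m) * real (sum_list m + k) powr (- Re s)) summable_on ?A"
  proof (cases "norm z < 1")
    case True
    then have "(\<lambda>m. norm z ^ sum_list m * (real (sum_list m) + real k) powr (- Re s)) summable_on ?A"
      by (intro summable_on_tuples_geometric) auto
    then show ?thesis
      by (simp add: norm_power add.commute)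
  next
    case False
    with z have "norm z = 1" and "real k < Re s"
      by auto
    with k have "(\<lambda>m. (real (sum_list m) + real k) powr (- Re s)) summable_on ?A"
      by (intro summable_on_tuples_powr) auto
    with \<open>norm z = 1\<close> show ?thesis
      by (simp add: norm_power add.commute)
  qed
  have B: "1 \<le> real (sum_list m + k)" for m
    using k by simp
  have series:
    "jackson_integrable q (\<lambda>a. infsum (\<lambda>m. z ^ sum_list m / of_real (real (sum_list m + k) + e * a) powr s) ?A)"
    "(\<lambda>l. of_real e ^ l * ((- s) gchoose l) *
        infsum (\<lambda>m. z ^ sum_list m / of_real (real (sum_list m + k)) powr (s + of_nat l)) ?A
        / qnum q (of_nat (l + 1)))
      sums jackson_integral q (\<lambda>a. infsum (\<lambda>m. z ^ sum_list m / of_real (real (sum_list m + k) + e * a) powr s) ?A)"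
    by (rule jackson_integral_shifted_series[OF q e B majorant])+
  have HL_eq: "(\<lambda>a. multi_HL_zeta k z s (of_nat k + of_real e * of_real a)) =
      (\<lambda>a. infsum (\<lambda>m. z ^ sum_list m / of_real (real (sum_list m + k) + e * a) powr s) ?A)"
    unfolding multi_HL_zeta_def by (intro ext infsum_cong) (simp add: add_ac)
  have LL_eq: "of_real e ^ l * ((- s) gchoose l) * multi_LL_zeta k z (s + of_nat l) / qnum q (of_nat (l + 1)) =
      z ^ k * (of_real e ^ l * ((- s) gchoose l) *
        infsum (\<lambda>m. z ^ sum_list m / of_real (real (sum_list m + k)) powr (s + of_nat l)) ?A
        / qnum q (of_nat (l + 1)))" for l
    by (simp add: multi_LL_zeta_shift[of k] mult_ac)
  show "jackson_integrable q (\<lambda>a. multi_HL_zeta k z s (of_nat k + of_real e * of_real a))"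
    unfolding HL_eq by (rule series(1))
  show "(\<lambda>l. of_real e ^ l * ((- s) gchoose l) * multi_LL_zeta k z (s + of_nat l) / qnum q (of_nat (l + 1)))
           sums (z ^ k * jackson_integral q (\<lambda>a. multi_HL_zeta k z s (of_nat k + of_real e * of_real a)))"
    unfolding HL_eq LL_eq by (rule sums_mult[OF series(2)])
qed

lemma sums_power_mult_imp:
  fixes z J :: complex
  assumes "f sums (z ^ k * J)" and "z \<noteq> 0"
  shows "summable f \<and> J = z powi (- int k) * suminf f"
  using assms by (simp add: sums_iff power_int_minus field_simps)

theorem theorem1p1:
  fixes q :: real and k :: nat and z s :: complex
  assumes "q > 1" and "k > 0"
  shows
   "(norm z < 1 \<and> Re s < 1 \<longrightarrow>
      jackson_integrable q (\<lambda>a. multi_HL_zeta k z s (of_real a)) \<and>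
      (\<forall>r<k. summable (\<lambda>l. ((- s) gchoose l) * multi_LL_zeta (k - r) z (s + of_nat l)
                               / qnum q (of_nat (l + 1)))) \<and>
      jackson_integral q (\<lambda>a. multi_HL_zeta k z s (of_real a)) =
        1 / qnum q (1 - s) +
        (\<Sum>r<k. of_nat (k choose r) *
           (\<Sum>l. ((- s) gchoose l) * multi_LL_zeta (k - r) z (s + of_nat l)
                   / qnum q (of_nat (l + 1)))))
    \<and>
    (z \<noteq> 0 \<and> (norm z < 1 \<or> (norm z = 1 \<and> Re s > real k)) \<longrightarrow>
      jackson_integrable q (\<lambda>a. multi_HL_zeta k z s (of_nat k - of_real a)) \<and>
      summable (\<lambda>l. (-1) ^ l * ((- s) gchoose l) * multi_LL_zeta k z (s + of_nat l)
                       / qnum q (of_nat (l + 1))) \<and>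
      jackson_integral q (\<lambda>a. multi_HL_zeta k z s (of_nat k - of_real a)) =
        z powi (- int k) *
        (\<Sum>l. (-1) ^ l * ((- s) gchoose l) * multi_LL_zeta k z (s + of_nat l)
               / qnum q (of_nat (l + 1))) \<and>
      jackson_integrable q (\<lambda>a. multi_HL_zeta k z s (of_nat k + of_real a)) \<and>
      summable (\<lambda>l. ((- s) gchoose l) * multi_LL_zeta k z (s + of_nat l)
                       / qnum q (of_nat (l + 1))) \<and>
      jackson_integral q (\<lambda>a. multi_HL_zeta k z s (of_nat k + of_real a)) =
        z powi (- int k) *
        (\<Sum>l. ((- s) gchoose l) * multi_LL_zeta k z (s + of_nat l)
               / qnum q (of_nat (l + 1))))"
  using jackson_integral_multi_HL_zeta[OF assms(1)] summable_multi_LL_zeta_series[OF assms(1)]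
    jackson_integral_multi_HL_zeta_shifted[OF assms, of z s "-1"]
    jackson_integral_multi_HL_zeta_shifted[OF assms, of z s 1]
  by (auto dest: sums_power_mult_imp)

end
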